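(* Let $\Gamma$ be a countable discrete group and $\mu$ a symmetric probability measure on $\Gamma$. If $0\neq T\in\mathcal B(\ell^2(\Gamma))$ and $\lambda\in\mathbb T$ satisfy $\mathcal P_\mu(T)=\lambda T$, then $\lambda\in\{1,-1\}$.
   Context: $\rho$ denotes the right regular representation of $\Gamma$ on $\ell^2(\Gamma)$, $\rho_g\delta_x=\delta_{xg^{-1}}$. The Markov operator $\mathcal P_\mu:\mathcal B(\ell^2(\Gamma))\to\mathcal B(\ell^2(\Gamma))$ is $\mathcal P_\mu(T)=\sum_{g\in\Gamma}\mu(g)\rho_gT\rho_g^*$. $\mu$ is symmetric if $\mu(g)=\mu(g^{-1})$ for all $g\in\Gamma$. *)

theory Defs
  imports "HOL-Analysis.Analysis"
begin

text \<open>The group \<Gamma> is a type of class group_add (written additively, not assumed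
commutative) and countable.  Elements of l^2(\<Gamma>) are complex functions on \<Gamma>
with square-summable modulus.\<close>

definition l2 :: "('g \<Rightarrow> complex) set" where
  "l2 = {f. (\<lambda>x. (cmod (f x))^2) summable_on UNIV}"

definition l2norm :: "('g \<Rightarrow> complex) \<Rightarrow> real" where
  "l2norm f = sqrt (\<Sum>\<^sub>\<infinity>x. (cmod (f x))^2)"

text \<open>Bounded linear operators on l^2(\<Gamma>), represented by their action on l^2
(values outside l^2 are irrelevant).\<close>

definition bounded_op :: "(('g \<Rightarrow> complex) \<Rightarrow> ('g \<Rightarrow> complex)) \<Rightarrow> bool" where
  "bounded_op T \<longleftrightarrow>
     (\<forall>f\<in>l2. T f \<in> l2) \<and>
     (\<forall>f\<in>l2. \<forall>h\<in>l2. \<forall>a b. T (\<lambda>x. a * f x + b * h x) = (\<lambda>x. a * T f x + b * T h x)) \<and>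
     (\<exists>C. \<forall>f\<in>l2. l2norm (T f) \<le> C * l2norm f)"

text \<open>Right regular representation: rho_g delta_x = delta_{x g^{-1}},
i.e. (rho_g f)(y) = f(y g); its adjoint is rho_{g^{-1}}.\<close>

definition rho :: "'g::group_add \<Rightarrow> ('g \<Rightarrow> complex) \<Rightarrow> ('g \<Rightarrow> complex)" where
  "rho g f = (\<lambda>y. f (y + g))"

definition rho_adj :: "'g::group_add \<Rightarrow> ('g \<Rightarrow> complex) \<Rightarrow> ('g \<Rightarrow> complex)" where
  "rho_adj g f = (\<lambda>y. f (y - g))"

text \<open>Markov operator P_mu(T) = sum_g mu(g) rho_g T rho_g^*; the series converges
absolutely in operator norm, hence pointwise at every coordinate.\<close>

definition markov_op :: "('g::group_add \<Rightarrow> real) \<Rightarrow> (('g \<Rightarrow> complex) \<Rightarrow> ('g \<Rightarrow> complex))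
     \<Rightarrow> ('g \<Rightarrow> complex) \<Rightarrow> ('g \<Rightarrow> complex)" where
  "markov_op \<mu> T f = (\<lambda>x. \<Sum>\<^sub>\<infinity>g. complex_of_real (\<mu> g) * rho g (T (rho_adj g f)) x)"

definition prob_on_group :: "('g \<Rightarrow> real) \<Rightarrow> bool" where
  "prob_on_group \<mu> \<longleftrightarrow> (\<forall>g. \<mu> g \<ge> 0) \<and> (\<mu> has_sum 1) UNIV"

definition symmetric_measure :: "('g::group_add \<Rightarrow> real) \<Rightarrow> bool" where
  "symmetric_measure \<mu> \<longleftrightarrow> (\<forall>g. \<mu> g = \<mu> (- g))"

end

theory Submission
  imports Defs
begin

text \<open>Fix f in l^2 and x with (T f)(x) \<noteq> 0, and consider u(h) = (T \<rho>_h^* f)(x + h). It is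
bounded and satisfies \<Sum>_g \<mu>(g) u(h + g) = \<lambda> u(h). If |u(h)| is close to M = sup |u|, then
\<lambda> u(h) is an average of values of modulus at most M with modulus close to M, so every
u(h + g) with \<mu>(g) > 0 is close to \<lambda> u(h). Applying this at h and, by symmetry of \<mu>,
with the step -g at h + g yields u(h) \<approx> \<lambda> u(h + g) \<approx> \<lambda>^2 u(h); letting |u(h)| \<rightarrow> M > 0
forces \<lambda>^2 = 1.\<close>

lemma has_sum_one_obtains_pos:
  fixes \<mu> :: "'a \<Rightarrow> real"
  assumes "\<And>g. \<mu> g \<ge> 0" and "(\<mu> has_sum 1) UNIV"
  obtains g where "\<mu> g > 0"
proof (rule ccontr)
  assume "\<not> thesis"
  with that have "\<mu> g \<le> 0" for g by (meson not_less)
  with assms(1) have "\<mu> = (\<lambda>_. 0)" by (intro ext antisym)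
  then have "(\<mu> has_sum 0) UNIV" by (simp add: has_sum_0)
  with assms(2) show False using has_sum_unique by force
qed

lemma weighted_average_deficit_le:
  fixes \<mu> :: "'a \<Rightarrow> real" and v :: "'a \<Rightarrow> complex"
  assumes nonneg: "\<And>g. \<mu> g \<ge> 0" and total: "(\<mu> has_sum 1) UNIV"
    and bound: "\<And>g. cmod (v g) \<le> M"
    and average: "(\<Sum>\<^sub>\<infinity>g. complex_of_real (\<mu> g) * v g) = c"
  shows "\<mu> g0 * (cmod c * M - Re (cnj c * v g0)) \<le> cmod c * (M - cmod c)"
proof -
  define a where "a = cmod c"
  define d where "d g = \<mu> g * (a * M) + - (\<mu> g * Re (cnj c * v g))" for g
  have "(\<lambda>g. M * \<mu> g) summable_on UNIV"
    using total summable_on_cmult_right has_sum_imp_summable by blast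
  then have "(\<lambda>g. norm (complex_of_real (\<mu> g) * v g)) summable_on UNIV"
    by (rule summable_on_comparison_test)
       (auto simp: norm_mult nonneg abs_of_nonneg mult.commute[of M] bound mult_left_mono)
  then have "(\<lambda>g. complex_of_real (\<mu> g) * v g) summable_on UNIV"
    by (rule abs_summable_summable)
  then have "((\<lambda>g. complex_of_real (\<mu> g) * v g) has_sum c) UNIV"
    using average by (auto dest: has_sum_infsum)
  then have "((\<lambda>g. Re (cnj c * (complex_of_real (\<mu> g) * v g))) has_sum Re (cnj c * c)) UNIV"
    by (rule has_sum_bounded_linear[rotated])
       (intro bounded_linear_compose[OF bounded_linear_Re bounded_linear_mult_right])
  moreover have "Re (cnj c * (complex_of_real (\<mu> g) * v g)) = \<mu> g * Re (cnj c * v g)" for g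
    by (simp add: algebra_simps)
  moreover have "Re (cnj c * c) = a\<^sup>2"
    unfolding a_def cmod_power2 by (simp add: power2_eq_square)
  ultimately have "((\<lambda>g. \<mu> g * Re (cnj c * v g)) has_sum a\<^sup>2) UNIV"
    by simp
  then have total_deficit: "(d has_sum 1 * (a * M) + - a\<^sup>2) UNIV"
    unfolding d_def by (intro has_sum_add has_sum_cmult_left[OF total] has_sum_uminusI)
  have d_nonneg: "d g \<ge> 0" for g
  proof -
    have "Re (cnj c * v g) \<le> cmod (cnj c * v g)" by (rule complex_Re_le_cmod)
    also have "\<dots> \<le> a * M" by (simp add: a_def norm_mult bound mult_left_mono)
    finally have "0 \<le> a * M - Re (cnj c * v g)" by simp
    then show ?thesis by (simp add: d_def nonneg flip: right_diff_distrib)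
  qed
  have "(d has_sum d g0) {g0}" by (simp add: has_sum_finite[of "{g0}", simplified])
  then have "d g0 \<le> 1 * (a * M) + - a\<^sup>2"
    by (rule has_sum_mono_neutral[OF _ total_deficit]) (simp_all add: d_nonneg)
  then show ?thesis by (simp add: d_def a_def power2_eq_square algebra_simps)
qed

lemma weighted_average_norm_diff_le:
  fixes \<mu> :: "'a \<Rightarrow> real" and v :: "'a \<Rightarrow> complex"
  assumes nonneg: "\<And>g. \<mu> g \<ge> 0" and total: "(\<mu> has_sum 1) UNIV"
    and bound: "\<And>g. cmod (v g) \<le> M"
    and average: "(\<Sum>\<^sub>\<infinity>g. complex_of_real (\<mu> g) * v g) = c" and c_le: "cmod c \<le> M"
    and pos: "\<mu> g0 > 0"
  shows "(cmod (v g0 - c))\<^sup>2 \<le> (M - cmod c) * M * (1 + 2 / \<mu> g0)"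
proof -
  define a where "a = cmod c"
  define m where "m = \<mu> g0"
  have a_ge: "a \<ge> 0" by (simp add: a_def)
  have deficit: "a * M - Re (cnj c * v g0) \<le> a * (M - a) / m"
    using weighted_average_deficit_le[OF nonneg total bound average, of g0] pos
    by (simp add: a_def m_def field_simps)
  have "(cmod (v g0 - c))\<^sup>2 = (cmod (v g0))\<^sup>2 - 2 * Re (cnj c * v g0) + a\<^sup>2"
    by (simp only: cmod_power2 a_def) (simp add: power2_eq_square algebra_simps)
  also have "\<dots> \<le> M\<^sup>2 - 2 * Re (cnj c * v g0) + a\<^sup>2"
    using bound[of g0] by (simp add: power_mono)
  also have "\<dots> \<le> (M - a)\<^sup>2 + 2 * (a * (M - a) / m)"
    using deficit power2_diff[of M a] by (simp only: mult.commute[of M a] mult.assoc)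
  also have "\<dots> \<le> (M - a) * M + 2 * (M * (M - a) / m)"
  proof -
    have "(M - a)\<^sup>2 \<le> (M - a) * M"
      using a_ge c_le unfolding power2_eq_square a_def by (intro mult_left_mono) auto
    moreover have "a * (M - a) / m \<le> M * (M - a) / m"
      using a_ge c_le pos by (intro divide_right_mono mult_right_mono) (auto simp: a_def m_def)
    ultimately show ?thesis by linarith
  qed
  also have "\<dots> = (M - a) * M * (1 + 2 / m)"
    using pos by (simp add: m_def field_simps)
  finally show ?thesis by (simp add: a_def m_def)
qed

lemma tendsto_Sup_range:
  fixes f :: "'a \<Rightarrow> real"
  assumes "bdd_above (range f)"
  obtains xs :: "nat \<Rightarrow> 'a" where "(\<lambda>n. f (xs n)) \<longlonglongrightarrow> (SUP x. f x)"
proof -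
  have "(SUP x. f x) \<in> closure (range f)"
    using closure_contains_Sup[OF _ assms] by simp
  then obtain ys where "\<forall>n. ys n \<in> range f" "ys \<longlonglongrightarrow> (SUP x. f x)"
    unfolding closure_sequential by blast
  then show ?thesis
    using that[of "\<lambda>n. inv f (ys n)"] by (simp add: f_inv_into_f)
qed

lemma eigenfunction_sq_defect_le:
  fixes \<mu> :: "'g::group_add \<Rightarrow> real" and u :: "'g \<Rightarrow> complex"
  assumes nonneg: "\<And>g. \<mu> g \<ge> 0" and total: "(\<mu> has_sum 1) UNIV"
    and symmetric: "\<And>g. \<mu> (- g) = \<mu> g"
    and le_M: "\<And>h. cmod (u h) \<le> M"
    and unimodular: "cmod lam = 1"
    and eigen: "\<And>h. (\<Sum>\<^sub>\<infinity>g. complex_of_real (\<mu> g) * u (h + g)) = lam * u h"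
    and pos: "\<mu> g0 > 0"
  defines "K \<equiv> M * (1 + 2 / \<mu> g0)"
  shows "cmod (1 - lam\<^sup>2) * cmod (u h)
    \<le> sqrt (K * (M - cmod (u h) + sqrt (K * (M - cmod (u h))))) + sqrt (K * (M - cmod (u h)))"
proof -
  have K_ge: "K \<ge> 0" using le_M[of h] pos by (simp add: K_def order_trans[OF norm_ge_zero])
  have step: "cmod (u (h + g) - lam * u h) \<le> sqrt (K * (M - cmod (u h)))"
    if "\<mu> g = \<mu> g0" for h g
  proof -
    have "(cmod (u (h + g) - lam * u h))\<^sup>2 \<le> (M - cmod (lam * u h)) * M * (1 + 2 / \<mu> g)"
      using weighted_average_norm_diff_le[OF nonneg total le_M eigen, of h g] pos that
      by (simp add: norm_mult unimodular le_M)
    then show ?thesis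
      using that unimodular by (intro real_le_rsqrt) (simp add: norm_mult K_def mult_ac)
  qed
  define w where "w = u (h + g0)"
  have forward: "cmod (w - lam * u h) \<le> sqrt (K * (M - cmod (u h)))"
    using step[of g0 h] by (simp add: w_def)
  have "cmod (u h) \<le> cmod w + cmod (w - lam * u h)"
    using norm_triangle_ineq2[of "lam * u h" w] norm_minus_commute[of "lam * u h" w]
    by (simp add: norm_mult unimodular)
  then have "M - cmod w \<le> M - cmod (u h) + sqrt (K * (M - cmod (u h)))"
    using forward by linarith
  then have "sqrt (K * (M - cmod w)) \<le> sqrt (K * (M - cmod (u h) + sqrt (K * (M - cmod (u h)))))"
    using K_ge by (intro real_sqrt_le_mono mult_left_mono)
  moreover have "cmod (u h - lam * w) \<le> sqrt (K * (M - cmod w))"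
    using step[of "- g0" "h + g0"] symmetric[of g0] by (simp add: w_def add.assoc)
  ultimately have backward:
    "cmod (u h - lam * w) \<le> sqrt (K * (M - cmod (u h) + sqrt (K * (M - cmod (u h)))))"
    by linarith
  have "(1 - lam\<^sup>2) * u h = (u h - lam * w) + lam * (w - lam * u h)"
    by (simp add: algebra_simps power2_eq_square)
  then have "cmod ((1 - lam\<^sup>2) * u h) \<le> cmod (u h - lam * w) + cmod (lam * (w - lam * u h))"
    by (metis norm_triangle_ineq)
  also have "cmod (lam * (w - lam * u h)) = cmod (w - lam * u h)"
    by (simp add: norm_mult unimodular)
  finally show ?thesis using forward backward by (simp add: norm_mult)
qed

lemma bounded_eigenfunction_unimodular_eigenvalue:
  fixes \<mu> :: "'g::group_add \<Rightarrow> real" and u :: "'g \<Rightarrow> complex"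
  assumes nonneg: "\<And>g. \<mu> g \<ge> 0" and total: "(\<mu> has_sum 1) UNIV"
    and symmetric: "\<And>g. \<mu> (- g) = \<mu> g"
    and bound: "\<And>h. cmod (u h) \<le> B" and nonzero: "u h0 \<noteq> 0"
    and unimodular: "cmod lam = 1"
    and eigen: "\<And>h. (\<Sum>\<^sub>\<infinity>g. complex_of_real (\<mu> g) * u (h + g)) = lam * u h"
  shows "lam = 1 \<or> lam = -1"
proof -
  obtain g0 where pos: "\<mu> g0 > 0" using has_sum_one_obtains_pos[OF nonneg total] .
  define M where "M = (SUP h. cmod (u h))"
  have bdd: "bdd_above (range (\<lambda>h. cmod (u h)))" by (meson bdd_aboveI2 bound)
  have le_M: "cmod (u h) \<le> M" for h unfolding M_def by (rule cSUP_upper[OF _ bdd]) auto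
  have M_pos: "M > 0" using le_M[of h0] nonzero by (meson less_le_trans zero_less_norm_iff)
  define K where "K = M * (1 + 2 / \<mu> g0)"
  define \<phi> where "\<phi> t = sqrt (K * (t + sqrt (K * t))) + sqrt (K * t)" for t
  have defect: "cmod (1 - lam\<^sup>2) * cmod (u h) \<le> \<phi> (M - cmod (u h))" for h
    using eigenfunction_sq_defect_le[OF nonneg total symmetric le_M unimodular eigen pos]
    by (simp add: \<phi>_def K_def)
  obtain hs :: "nat \<Rightarrow> 'g" where hs: "(\<lambda>n. cmod (u (hs n))) \<longlonglongrightarrow> M"
    using tendsto_Sup_range[OF bdd] unfolding M_def by blast
  have "(\<lambda>n. \<phi> (M - cmod (u (hs n)))) \<longlonglongrightarrow> \<phi> (M - M)"
    unfolding \<phi>_def by (intro tendsto_intros hs)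
  then have "cmod (1 - lam\<^sup>2) * M \<le> 0"
    using LIMSEQ_le[OF tendsto_mult_left[OF hs] _ exI[of _ 0]] defect by (simp add: \<phi>_def)
  then have "lam\<^sup>2 = 1" using M_pos by (simp add: mult_le_0_iff)
  then show ?thesis by (simp add: power2_eq_1_iff)
qed

lemma l2_shift:
  fixes f :: "'g::group_add \<Rightarrow> complex"
  assumes "f \<in> l2"
  shows "rho_adj h f \<in> l2" and "l2norm (rho_adj h f) = l2norm f"
proof -
  have bij: "bij_betw (\<lambda>y. y - h) UNIV UNIV"
    by (rule bij_betwI[where g="\<lambda>y. y + h"]) auto
  show "rho_adj h f \<in> l2"
    using assms summable_on_reindex_bij_betw[OF bij, of "\<lambda>x. (cmod (f x))\<^sup>2"]
    by (simp add: l2_def rho_adj_def)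
  show "l2norm (rho_adj h f) = l2norm f"
    using infsum_reindex_bij_betw[OF bij, of "\<lambda>x. (cmod (f x))\<^sup>2"]
    by (simp add: l2norm_def rho_adj_def)
qed

lemma norm_le_l2norm:
  assumes "f \<in> l2"
  shows "cmod (f y) \<le> l2norm f"
proof -
  have "(\<Sum>\<^sub>\<infinity>x\<in>{y}. (cmod (f x))\<^sup>2) \<le> (\<Sum>\<^sub>\<infinity>x. (cmod (f x))\<^sup>2)"
    using assms by (intro infsum_mono_neutral) (auto simp: l2_def)
  then show ?thesis unfolding l2norm_def by (intro real_le_rsqrt) simp
qed

lemma rho_adj_rho_adj: "rho_adj g (rho_adj h f) = rho_adj (h + g) (f :: 'g::group_add \<Rightarrow> _)"
proof -
  have "y - g - h = y - (h + g)" for y :: 'g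
    by (metis add.assoc diff_conv_add_uminus minus_add)
  then show ?thesis by (simp add: rho_adj_def)
qed

lemma bounded_op_shift_bounded:
  assumes "bounded_op T" and "f \<in> l2"
  obtains B where "\<And>h y. cmod (T (rho_adj h f) y) \<le> B"
proof -
  obtain C where C: "\<forall>f\<in>l2. l2norm (T f) \<le> C * l2norm f" and l2: "\<forall>f\<in>l2. T f \<in> l2"
    using assms(1) unfolding bounded_op_def by blast
  have "cmod (T (rho_adj h f) y) \<le> C * l2norm f" for h y
  proof -
    have shifted: "rho_adj h f \<in> l2" using l2_shift(1)[OF assms(2)] .
    then have "T (rho_adj h f) \<in> l2" using l2 by blast
    then have "cmod (T (rho_adj h f) y) \<le> l2norm (T (rho_adj h f))" by (rule norm_le_l2norm)
    also have "\<dots> \<le> C * l2norm (rho_adj h f)" using C shifted by blast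
    also have "\<dots> = C * l2norm f" using l2_shift(2)[OF assms(2)] by simp
    finally show ?thesis .
  qed
  then show ?thesis using that by blast
qed

theorem theorem2p3:
  fixes \<mu> :: "'g::{group_add, countable} \<Rightarrow> real"
    and T :: "('g \<Rightarrow> complex) \<Rightarrow> ('g \<Rightarrow> complex)"
    and lam :: complex
  assumes "prob_on_group \<mu>"
    and "symmetric_measure \<mu>"
    and "bounded_op T"
    and "\<exists>f\<in>l2. T f \<noteq> (\<lambda>_. 0)"
    and "cmod lam = 1"
    and "\<forall>f\<in>l2. markov_op \<mu> T f = (\<lambda>x. lam * T f x)"
  shows "lam = 1 \<or> lam = -1"
proof -
  obtain f where f: "f \<in> l2" "T f \<noteq> (\<lambda>_. 0)" using assms(4) by blast
  then obtain x where "T f x \<noteq> 0" by auto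
  define u where "u h = T (rho_adj h f) (x + h)" for h
  have nonzero: "u 0 \<noteq> 0" using \<open>T f x \<noteq> 0\<close> by (simp add: u_def rho_adj_def)
  obtain B where bound: "\<And>h. cmod (u h) \<le> B"
    using bounded_op_shift_bounded[OF assms(3) f(1)] unfolding u_def by metis
  have eigen: "(\<Sum>\<^sub>\<infinity>g. complex_of_real (\<mu> g) * u (h + g)) = lam * u h" for h
  proof -
    have "markov_op \<mu> T (rho_adj h f) (x + h) = lam * T (rho_adj h f) (x + h)"
      using assms(6) l2_shift(1)[OF f(1)] by simp
    then show ?thesis by (simp add: markov_op_def rho_def rho_adj_rho_adj u_def add.assoc)
  qed
  have nonneg: "\<And>g. \<mu> g \<ge> 0" and total: "(\<mu> has_sum 1) UNIV"
    using assms(1) by (simp_all add: prob_on_group_def)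
  have symmetric: "\<And>g. \<mu> (- g) = \<mu> g"
    using assms(2) unfolding symmetric_measure_def by metis
  show ?thesis
    using bounded_eigenfunction_unimodular_eigenvalue[OF nonneg total symmetric bound nonzero assms(5) eigen] .
qed

end
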